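(* A commuting pair $(S,P)$ of operators on a Hilbert space is a $\Gamma$-contraction if and only if $(0,S,P)$ is a $\mathbb P$-contraction.
   Context: The pentablock is $\mathbb P=\{(a_{21},\operatorname{tr}A_0,\det A_0): A_0=[a_{ij}]\in M_2(\mathbb C),\ \|A_0\|<1\}\subset\mathbb C^3$ and $\Gamma=\{(z_1+z_2,z_1z_2):z_1,z_2\in\overline{\mathbb D}\}$. A compact $K$ is a spectral set for a commuting tuple if the Taylor joint spectrum lies in $K$ and $\|f(\underline T)\|\le\sup_K|f|$ for every rational $f$ with no poles in $K$. A $\mathbb P$-contraction (resp. $\Gamma$-contraction) is a commuting triple (resp. pair) having $\overline{\mathbb P}$ (resp. $\Gamma$) as a spectral set. *)

theory Defs
  imports "HOL-Analysis.Analysis"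
begin

text \<open>A complex Hilbert space, presented as a real Hilbert space (complete real inner
product space) equipped with a compatible complex scalar multiplication; the complex
inner product is then recovered from the real one and induces the same norm.\<close>

class complex_hilbert = real_inner + complete_space +
  fixes scaleC :: "complex \<Rightarrow> 'a \<Rightarrow> 'a"
  assumes scaleC_add_right: "scaleC a (x + y) = scaleC a x + scaleC a y"
    and scaleC_add_left: "scaleC (a + b) x = scaleC a x + scaleC b x"
    and scaleC_scaleC: "scaleC a (scaleC b x) = scaleC (a * b) x"
    and scaleC_one: "scaleC 1 x = x"
    and scaleC_of_real: "scaleC (complex_of_real r) x = scaleR r x"
    and inner_scaleC_ii: "inner (scaleC \<i> x) (scaleC \<i> y) = inner x y"

text \<open>Non-vacuity: the complex numbers form such a space.\<close>
instantiation complex :: complex_hilbert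
begin
definition scaleC_complex_def: "scaleC (a::complex) (x::complex) = a * x"
instance
  by standard (auto simp: scaleC_complex_def algebra_simps scaleR_conv_of_real
                          inner_complex_def)
end

definition bop :: "('a::complex_hilbert \<Rightarrow> 'a) \<Rightarrow> bool" where
  "bop T \<longleftrightarrow> bounded_linear T \<and> (\<forall>c x. T (scaleC c x) = scaleC c (T x))"

text \<open>Koszul complex of a pair (A,B):
  0 \<rightarrow> H \<rightarrow> H\<oplus>H \<rightarrow> H \<rightarrow> 0,  x \<mapsto> (Ax,Bx),  (x,y) \<mapsto> Bx - Ay.\<close>
definition koszul_exact2 :: "('a::complex_hilbert \<Rightarrow> 'a) \<Rightarrow> ('a \<Rightarrow> 'a) \<Rightarrow> bool" where
  "koszul_exact2 A B \<longleftrightarrow>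
     (\<forall>x. A x = 0 \<and> B x = 0 \<longrightarrow> x = 0) \<and>
     (\<forall>x y. B x - A y = 0 \<longrightarrow> (\<exists>z. x = A z \<and> y = B z)) \<and>
     (\<forall>w. \<exists>x y. w = B x - A y)"

text \<open>Koszul complex of a triple (A,B,C):
  0 \<rightarrow> H \<rightarrow> H^3 \<rightarrow> H^3 \<rightarrow> H \<rightarrow> 0.\<close>
definition koszul_exact3 ::
  "('a::complex_hilbert \<Rightarrow> 'a) \<Rightarrow> ('a \<Rightarrow> 'a) \<Rightarrow> ('a \<Rightarrow> 'a) \<Rightarrow> bool" where
  "koszul_exact3 A B C \<longleftrightarrow>
     (\<forall>x. A x = 0 \<and> B x = 0 \<and> C x = 0 \<longrightarrow> x = 0) \<and>
     (\<forall>x1 x2 x3. B x3 - C x2 = 0 \<and> C x1 - A x3 = 0 \<and> A x2 - B x1 = 0 \<longrightarrow>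
         (\<exists>z. x1 = A z \<and> x2 = B z \<and> x3 = C z)) \<and>
     (\<forall>y1 y2 y3. A y1 + B y2 + C y3 = 0 \<longrightarrow>
         (\<exists>x1 x2 x3. y1 = B x3 - C x2 \<and> y2 = C x1 - A x3 \<and> y3 = A x2 - B x1)) \<and>
     (\<forall>w. \<exists>y1 y2 y3. w = A y1 + B y2 + C y3)"

definition taylor_spectrum2 ::
  "('a::complex_hilbert \<Rightarrow> 'a) \<Rightarrow> ('a \<Rightarrow> 'a) \<Rightarrow> (complex \<times> complex) set" where
  "taylor_spectrum2 T1 T2 =
     {(l1, l2). \<not> koszul_exact2 (\<lambda>x. T1 x - scaleC l1 x) (\<lambda>x. T2 x - scaleC l2 x)}"

definition taylor_spectrum3 ::
  "('a::complex_hilbert \<Rightarrow> 'a) \<Rightarrow> ('a \<Rightarrow> 'a) \<Rightarrow> ('a \<Rightarrow> 'a) \<Rightarrow> (complex \<times> complex \<times> complex) set" where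
  "taylor_spectrum3 T1 T2 T3 =
     {(l1, l2, l3). \<not> koszul_exact3 (\<lambda>x. T1 x - scaleC l1 x) (\<lambda>x. T2 x - scaleC l2 x)
                                      (\<lambda>x. T3 x - scaleC l3 x)}"

definition mpoly_coeffs :: "('i \<Rightarrow> complex) \<Rightarrow> bool" where
  "mpoly_coeffs c \<longleftrightarrow> finite {m. c m \<noteq> 0}"

definition peval2 :: "(nat \<times> nat \<Rightarrow> complex) \<Rightarrow> complex \<times> complex \<Rightarrow> complex" where
  "peval2 c z = (\<Sum>m\<in>{m. c m \<noteq> 0}. c m * fst z ^ fst m * snd z ^ snd m)"

definition peval3 :: "(nat \<times> nat \<times> nat \<Rightarrow> complex) \<Rightarrow> complex \<times> complex \<times> complex \<Rightarrow> complex" where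
  "peval3 c z = (\<Sum>m\<in>{m. c m \<noteq> 0}.
      c m * fst z ^ fst m * fst (snd z) ^ fst (snd m) * snd (snd z) ^ snd (snd m))"

definition opeval2 ::
  "(nat \<times> nat \<Rightarrow> complex) \<Rightarrow> ('a::complex_hilbert \<Rightarrow> 'a) \<Rightarrow> ('a \<Rightarrow> 'a) \<Rightarrow> 'a \<Rightarrow> 'a" where
  "opeval2 c T1 T2 = (\<lambda>x. \<Sum>m\<in>{m. c m \<noteq> 0}. scaleC (c m) ((T1 ^^ fst m) ((T2 ^^ snd m) x)))"

definition opeval3 ::
  "(nat \<times> nat \<times> nat \<Rightarrow> complex) \<Rightarrow> ('a::complex_hilbert \<Rightarrow> 'a) \<Rightarrow> ('a \<Rightarrow> 'a) \<Rightarrow> ('a \<Rightarrow> 'a)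
     \<Rightarrow> 'a \<Rightarrow> 'a" where
  "opeval3 c T1 T2 T3 = (\<lambda>x. \<Sum>m\<in>{m. c m \<noteq> 0}.
      scaleC (c m) ((T1 ^^ fst m) ((T2 ^^ fst (snd m)) ((T3 ^^ snd (snd m)) x))))"

definition spectral_set2 ::
  "(complex \<times> complex) set \<Rightarrow> ('a::complex_hilbert \<Rightarrow> 'a) \<Rightarrow> ('a \<Rightarrow> 'a) \<Rightarrow> bool" where
  "spectral_set2 K T1 T2 \<longleftrightarrow>
     taylor_spectrum2 T1 T2 \<subseteq> K \<and>
     (\<forall>p q. mpoly_coeffs p \<and> mpoly_coeffs q \<and> (\<forall>z\<in>K. peval2 q z \<noteq> 0) \<longrightarrow>
        onorm (\<lambda>x. opeval2 p T1 T2 (inv (opeval2 q T1 T2) x))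
          \<le> (SUP z\<in>K. cmod (peval2 p z / peval2 q z)))"

definition spectral_set3 ::
  "(complex \<times> complex \<times> complex) set \<Rightarrow> ('a::complex_hilbert \<Rightarrow> 'a) \<Rightarrow> ('a \<Rightarrow> 'a)
     \<Rightarrow> ('a \<Rightarrow> 'a) \<Rightarrow> bool" where
  "spectral_set3 K T1 T2 T3 \<longleftrightarrow>
     taylor_spectrum3 T1 T2 T3 \<subseteq> K \<and>
     (\<forall>p q. mpoly_coeffs p \<and> mpoly_coeffs q \<and> (\<forall>z\<in>K. peval3 q z \<noteq> 0) \<longrightarrow>
        onorm (\<lambda>x. opeval3 p T1 T2 T3 (inv (opeval3 q T1 T2 T3) x))
          \<le> (SUP z\<in>K. cmod (peval3 p z / peval3 q z)))"

definition Gamma :: "(complex \<times> complex) set" where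
  "Gamma = {(z1 + z2, z1 * z2) | z1 z2. cmod z1 \<le> 1 \<and> cmod z2 \<le> 1}"

definition pentablock :: "(complex \<times> complex \<times> complex) set" where
  "pentablock = {(A $ 2 $ 1, A $ 1 $ 1 + A $ 2 $ 2, det A) | A :: complex^2^2.
                   onorm (\<lambda>x. A *v x) < 1}"

definition gamma_contraction :: "('a::complex_hilbert \<Rightarrow> 'a) \<Rightarrow> ('a \<Rightarrow> 'a) \<Rightarrow> bool" where
  "gamma_contraction S P \<longleftrightarrow>
     bop S \<and> bop P \<and> S \<circ> P = P \<circ> S \<and> spectral_set2 Gamma S P"

definition penta_contraction ::
  "('a::complex_hilbert \<Rightarrow> 'a) \<Rightarrow> ('a \<Rightarrow> 'a) \<Rightarrow> ('a \<Rightarrow> 'a) \<Rightarrow> bool" where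
  "penta_contraction A S P \<longleftrightarrow>
     bop A \<and> bop S \<and> bop P \<and> A \<circ> S = S \<circ> A \<and> A \<circ> P = P \<circ> A \<and> S \<circ> P = P \<circ> S \<and>
     spectral_set3 (closure pentablock) A S P"

end

theory Submission
  imports Defs
begin

text \<open>For \<open>\<lambda> \<noteq> 0\<close> the operator \<open>0 - \<lambda>\<close> is invertible and commutes with everything, so the
Koszul complex of \<open>(0 - \<lambda>, S - \<mu>, P - \<nu>)\<close> is exact; for \<open>\<lambda> = 0\<close> it is exact iff that of
\<open>(S - \<mu>, P - \<nu>)\<close> is. Hence the Taylor spectrum of \<open>(0, S, P)\<close> is \<open>{0} \<times> \<sigma>(S, P)\<close>.
On the geometric side, the closed pentablock projects onto \<open>\<Gamma>\<close> in its last two coordinates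
(trace and determinant of a contraction are the symmetric functions of its eigenvalues,
which lie in the closed disc), and it contains \<open>{0} \<times> \<Gamma>\<close> (limits of the points given by
the strict contractions \<open>r \<cdot> diag(z\<^sub>1, z\<^sub>2)\<close>, \<open>r < 1\<close>). A polynomial in \<open>(a, s, p)\<close> applied to
\<open>(0, S, P)\<close> is its restriction to \<open>a = 0\<close> applied to \<open>(S, P)\<close>, and a polynomial in \<open>(s, p)\<close>
is a polynomial in \<open>(a, s, p)\<close> not depending on \<open>a\<close>; with the two geometric facts this
transfers the von Neumann type bounds in both directions.\<close>

lemma scaleC_zero_right [simp]: "scaleC c (0::'a::complex_hilbert) = 0"
  using scaleC_add_right[of c "0::'a" 0] by simp

lemma scaleC_zero_left [simp]: "scaleC 0 (x::'a::complex_hilbert) = 0"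
  using scaleC_of_real[of 0 x] by simp

lemma scaleC_minus_right: "scaleC c (- x::'a::complex_hilbert) = - scaleC c x"
  using scaleC_add_right[of c "-x" x] by (simp add: eq_neg_iff_add_eq_0)

lemma scaleC_diff_right: "scaleC c (x - y::'a::complex_hilbert) = scaleC c x - scaleC c y"
  using scaleC_add_right[of c x "-y"] scaleC_minus_right[of c y] by simp

lemma linear_scaleC: "linear (scaleC c :: 'a::complex_hilbert \<Rightarrow> 'a)"
proof (rule linearI)
  fix x y :: 'a
  show "scaleC c (x + y) = scaleC c x + scaleC c y" by (rule scaleC_add_right)
next
  fix r :: real and x :: 'a
  have "scaleC c (r *\<^sub>R x) = scaleC (complex_of_real r) (scaleC c x)"
    by (simp add: scaleC_of_real[symmetric] scaleC_scaleC mult.commute)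
  then show "scaleC c (r *\<^sub>R x) = r *\<^sub>R scaleC c x" by (simp add: scaleC_of_real)
qed

lemma bop_linear: "bop T \<Longrightarrow> linear T"
  unfolding bop_def using bounded_linear.linear by blast

lemma bop_zero: "bop (\<lambda>_::'a::complex_hilbert. 0)"
  unfolding bop_def by simp

lemma linear_shift: "bop T \<Longrightarrow> linear (\<lambda>x. T x - scaleC l x)"
  by (rule linear_compose_sub[OF bop_linear linear_scaleC, simplified])

lemma shift_scaleC:
  "bop T \<Longrightarrow> T (scaleC c x) - scaleC l (scaleC c x) = scaleC c (T x - scaleC l x)"
  unfolding bop_def by (simp add: scaleC_scaleC scaleC_diff_right mult.commute)

section \<open>Koszul complexes\<close>

lemma koszul_exact2D:
  assumes "koszul_exact2 B C"
  shows "B x = 0 \<Longrightarrow> C x = 0 \<Longrightarrow> x = 0"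
    and "C x - B y = 0 \<Longrightarrow> \<exists>z. x = B z \<and> y = C z"
    and "\<exists>x y. w = C x - B y"
  using assms unfolding koszul_exact2_def by blast+

lemma koszul_exact3D:
  assumes "koszul_exact3 A B C"
  shows "A x = 0 \<Longrightarrow> B x = 0 \<Longrightarrow> C x = 0 \<Longrightarrow> x = 0"
    and "B x3 - C x2 = 0 \<Longrightarrow> C x1 - A x3 = 0 \<Longrightarrow> A x2 - B x1 = 0 \<Longrightarrow>
         \<exists>z. x1 = A z \<and> x2 = B z \<and> x3 = C z"
    and "\<exists>y1 y2 y3. w = A y1 + B y2 + C y3"
  using assms unfolding koszul_exact3_def by blast+

lemma koszul_exact3_zero_first_if_exact2:
  assumes lB: "linear B" and lC: "linear C" and ex: "koszul_exact2 B C"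
  shows "koszul_exact3 (\<lambda>_. 0) B C"
  unfolding koszul_exact3_def
proof (intro conjI allI impI)
  fix x assume "0 = 0 \<and> B x = 0 \<and> C x = 0"
  then show "x = 0" using koszul_exact2D(1)[OF ex] by blast
next
  fix x1 x2 x3 assume h: "B x3 - C x2 = 0 \<and> C x1 - 0 = 0 \<and> 0 - B x1 = 0"
  have "x1 = 0" using h koszul_exact2D(1)[OF ex, of x1] by simp
  moreover obtain z where "x2 = B z \<and> x3 = C z"
    using h koszul_exact2D(2)[OF ex, of x2 x3] by auto
  ultimately show "\<exists>z. x1 = 0 \<and> x2 = B z \<and> x3 = C z" by blast
next
  fix y1 y2 y3 assume "0 + B y2 + C y3 = 0"
  then have "C y3 - B (- y2) = 0" by (simp add: linear_neg[OF lB] add.commute)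
  then obtain z where z: "y3 = B z \<and> - y2 = C z" using koszul_exact2D(2)[OF ex] by blast
  obtain u v where uv: "y1 = C u - B v" using koszul_exact2D(3)[OF ex] by blast
  have "y1 = B (- v) - C (- u) \<and> y2 = C (- z) - 0 \<and> y3 = 0 - B (- z)"
    using z uv minus_minus[of y2] by (simp add: linear_neg[OF lB] linear_neg[OF lC])
  then show "\<exists>x1 x2 x3. y1 = B x3 - C x2 \<and> y2 = C x1 - 0 \<and> y3 = 0 - B x1" by blast
next
  fix w
  obtain u v where "w = C u - B v" using koszul_exact2D(3)[OF ex] by blast
  then have "w = 0 + B (- v) + C u" by (simp add: linear_neg[OF lB])
  then show "\<exists>y1 y2 y3. w = 0 + B y2 + C y3" by blast
qed

lemma koszul_exact2_if_exact3_zero_first: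
  assumes lB: "linear B" and lC: "linear C" and ex: "koszul_exact3 (\<lambda>_. 0) B C"
  shows "koszul_exact2 B C"
  unfolding koszul_exact2_def
proof (intro conjI allI impI)
  fix x assume "B x = 0 \<and> C x = 0"
  then show "x = 0" using koszul_exact3D(1)[OF ex, of x] by simp
next
  fix x y assume "C x - B y = 0"
  then have "B y - C x = 0" "C 0 - 0 = 0" "0 - B 0 = 0"
    by (simp_all add: linear_0[OF lB] linear_0[OF lC])
  then obtain z where "0 = (0::'a) \<and> x = B z \<and> y = C z"
    using koszul_exact3D(2)[OF ex, of y x 0] by blast
  then show "\<exists>z. x = B z \<and> y = C z" by blast
next
  fix w
  obtain y1 y2 y3 where "w = 0 + B y2 + C y3" using koszul_exact3D(3)[OF ex, of w] by blast
  then have "w = C y3 - B (- y2)" by (simp add: linear_neg[OF lB] add.commute)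
  then show "\<exists>x y. w = C x - B y" by blast
qed

lemma koszul_exact3_if_first_invertible:
  assumes lB: "linear B" and lC: "linear C" and lAi: "linear Ai"
    and inv1: "\<And>x. A (Ai x) = x" and inv2: "\<And>x. Ai (A x) = x"
    and cB: "\<And>x. B (Ai x) = Ai (B x)" and cC: "\<And>x. C (Ai x) = Ai (C x)"
  shows "koszul_exact3 A B C"
  unfolding koszul_exact3_def
proof (intro conjI allI impI)
  fix x assume "A x = 0 \<and> B x = 0 \<and> C x = 0"
  then show "x = 0" using inv2[of x] linear_0[OF lAi] by simp
next
  fix x1 x2 x3 assume h: "B x3 - C x2 = 0 \<and> C x1 - A x3 = 0 \<and> A x2 - B x1 = 0"
  have "x2 = B (Ai x1)" using h inv2[of x2] cB[of x1] by simp
  moreover have "x3 = C (Ai x1)" using h inv2[of x3] cC[of x1] by simp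
  ultimately show "\<exists>z. x1 = A z \<and> x2 = B z \<and> x3 = C z" using inv1[of x1] by metis
next
  fix y1 y2 y3 assume h: "A y1 + B y2 + C y3 = 0"
  have "B (Ai (- y2)) - C (Ai y3) = Ai (- (B y2 + C y3))"
    by (simp add: cB cC linear_neg[OF lB] linear_neg[OF lAi] linear_add[OF lAi]
        linear_diff[OF lAi])
  also have "- (B y2 + C y3) = A y1" using h by (metis add.assoc add.commute neg_eq_iff_add_eq_0)
  finally have "y1 = B (Ai (- y2)) - C (Ai y3)" using inv2 by simp
  then have "y1 = B (Ai (- y2)) - C (Ai y3) \<and> y2 = C 0 - A (Ai (- y2)) \<and> y3 = A (Ai y3) - B 0"
    by (simp add: inv1 linear_0[OF lB] linear_0[OF lC])
  then show "\<exists>x1 x2 x3. y1 = B x3 - C x2 \<and> y2 = C x1 - A x3 \<and> y3 = A x2 - B x1" by blast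
next
  fix w
  have "w = A (Ai w) + B 0 + C 0" by (simp add: inv1 linear_0[OF lB] linear_0[OF lC])
  then show "\<exists>y1 y2 y3. w = A y1 + B y2 + C y3" by blast
qed

lemma mem_taylor_spectrum3_zero_first:
  fixes S P :: "'a::complex_hilbert \<Rightarrow> 'a"
  assumes bS: "bop S" and bP: "bop P"
  shows "(l1, l2, l3) \<in> taylor_spectrum3 (\<lambda>_. 0) S P \<longleftrightarrow>
         l1 = 0 \<and> (l2, l3) \<in> taylor_spectrum2 S P"
proof -
  let ?B = "\<lambda>x. S x - scaleC l2 x" and ?C = "\<lambda>x. P x - scaleC l3 x"
  have lB: "linear ?B" and lC: "linear ?C" using linear_shift bS bP by auto
  show ?thesis
  proof (cases "l1 = 0")
    case True
    then show ?thesis unfolding taylor_spectrum3_def taylor_spectrum2_def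
      using koszul_exact3_zero_first_if_exact2[OF lB lC]
        koszul_exact2_if_exact3_zero_first[OF lB lC] by auto
  next
    case False
    let ?Ai = "\<lambda>x::'a. - scaleC (inverse l1) x"
    have "koszul_exact3 (\<lambda>x. 0 - scaleC l1 x) ?B ?C"
    proof (rule koszul_exact3_if_first_invertible[OF lB lC])
      show "linear ?Ai" by (rule linear_compose_neg[OF linear_scaleC])
      fix x :: 'a
      show "0 - scaleC l1 (?Ai x) = x" "?Ai (0 - scaleC l1 x) = x"
        using False by (simp_all add: scaleC_minus_right scaleC_scaleC scaleC_one)
      show "?B (?Ai x) = ?Ai (?B x)"
        using shift_scaleC[OF bS, of "inverse l1" x l2] linear_neg[OF lB]
        by (simp add: scaleC_minus_right) (metis minus_diff_eq)
      show "?C (?Ai x) = ?Ai (?C x)"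
        using shift_scaleC[OF bP, of "inverse l1" x l3] linear_neg[OF lC]
        by (simp add: scaleC_minus_right) (metis minus_diff_eq)
    qed
    then show ?thesis unfolding taylor_spectrum3_def using False by auto
  qed
qed

section \<open>Polynomials not depending on the first variable\<close>

definition restrict_first :: "(nat \<times> nat \<times> nat \<Rightarrow> complex) \<Rightarrow> nat \<times> nat \<Rightarrow> complex" where
  "restrict_first c m = c (0, fst m, snd m)"

definition lift_first :: "(nat \<times> nat \<Rightarrow> complex) \<Rightarrow> nat \<times> nat \<times> nat \<Rightarrow> complex" where
  "lift_first p m = (if fst m = 0 then p (snd m) else 0)"

lemma restrict_lift_first [simp]: "restrict_first (lift_first p) = p"
  by (rule ext) (simp add: restrict_first_def lift_first_def)

lemma inj_Pair_zero_first: "inj (\<lambda>m::nat \<times> nat. (0::nat, fst m, snd m))"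
  by (auto simp: inj_on_def prod_eq_iff)

lemma mpoly_coeffs_restrict_first: "mpoly_coeffs c \<Longrightarrow> mpoly_coeffs (restrict_first c)"
  using finite_vimageI[OF _ inj_Pair_zero_first, of "{m. c m \<noteq> 0}"]
  unfolding mpoly_coeffs_def restrict_first_def by (simp add: vimage_def)

lemma mpoly_coeffs_lift_first: "mpoly_coeffs p \<Longrightarrow> mpoly_coeffs (lift_first p)"
proof -
  assume "mpoly_coeffs p"
  moreover have "{m. lift_first p m \<noteq> 0} = (\<lambda>m. (0::nat, m)) ` {m. p m \<noteq> 0}"
    by (auto simp: lift_first_def image_iff prod_eq_iff)
  ultimately show ?thesis unfolding mpoly_coeffs_def by simp
qed

lemma sum_support_restrict_first:
  fixes f :: "nat \<times> nat \<times> nat \<Rightarrow> 'b::comm_monoid_add"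
  assumes fin: "mpoly_coeffs c" and vanish: "\<And>m. fst m \<noteq> 0 \<Longrightarrow> f m = 0"
  shows "(\<Sum>m\<in>{m. c m \<noteq> 0}. f m) = (\<Sum>m\<in>{m. restrict_first c m \<noteq> 0}. f (0, fst m, snd m))"
proof -
  let ?e = "\<lambda>m::nat \<times> nat. (0::nat, fst m, snd m)"
  have "(\<Sum>m\<in>{m. c m \<noteq> 0}. f m) = (\<Sum>m\<in>{m. c m \<noteq> 0 \<and> fst m = 0}. f m)"
    by (rule sum.mono_neutral_right) (use fin[unfolded mpoly_coeffs_def] vanish in auto)
  also have "{m. c m \<noteq> 0 \<and> fst m = 0} = ?e ` {m. restrict_first c m \<noteq> 0}"
    by (auto simp: restrict_first_def image_iff)
  also have "(\<Sum>m\<in>?e ` {m. restrict_first c m \<noteq> 0}. f m)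
           = (\<Sum>m\<in>{m. restrict_first c m \<noteq> 0}. f (?e m))"
    by (rule sum.reindex_cong[OF inj_on_subset[OF inj_Pair_zero_first]]) auto
  finally show ?thesis .
qed

lemma peval3_zero_first: "mpoly_coeffs c \<Longrightarrow> peval3 c (0, z) = peval2 (restrict_first c) z"
  unfolding peval3_def peval2_def
  by (subst sum_support_restrict_first) (auto simp: restrict_first_def)

lemma peval3_lift_first: "mpoly_coeffs p \<Longrightarrow> peval3 (lift_first p) w = peval2 p (snd w)"
  unfolding peval3_def peval2_def
  by (subst sum_support_restrict_first[OF mpoly_coeffs_lift_first]) (auto simp: lift_first_def)

lemma funpow_zero_fun: "n \<noteq> 0 \<Longrightarrow> ((\<lambda>_::'b. 0::'b::zero) ^^ n) y = 0"
  by (cases n) simp_all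

lemma opeval3_zero_first:
  "mpoly_coeffs c \<Longrightarrow> opeval3 c (\<lambda>_. 0) S P = opeval2 (restrict_first c) S (P::'a::complex_hilbert \<Rightarrow> 'a)"
  unfolding opeval3_def opeval2_def
  by (rule ext, subst sum_support_restrict_first) (auto simp: restrict_first_def funpow_zero_fun)

lemma opeval3_lift_first:
  "mpoly_coeffs p \<Longrightarrow> opeval3 (lift_first p) (\<lambda>_. 0) S P = opeval2 p S (P::'a::complex_hilbert \<Rightarrow> 'a)"
  using opeval3_zero_first[OF mpoly_coeffs_lift_first] by simp

section \<open>The slice of the closed pentablock over \<open>a = 0\<close>\<close>

lemma char_root_eigenvector_2:
  fixes A :: "complex^2^2"
  assumes h: "l^2 - (A$1$1 + A$2$2) * l + det A = 0"
  shows "\<exists>v::complex^2. v \<noteq> 0 \<and> (\<forall>i. (A *v v) $ i = l * v $ i)"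
proof -
  have d: "(A$1$1 - l) * (A$2$2 - l) - A$1$2 * A$2$1 = 0"
    using h by (simp add: det_2 power2_eq_square algebra_simps)
  have eigenvector: "\<exists>v::complex^2. v \<noteq> 0 \<and> (\<forall>i. (A *v v) $ i = l * v $ i)"
    if "a \<noteq> 0 \<or> b \<noteq> 0" "A$1$1 * a + A$1$2 * b = l * a" "A$2$1 * a + A$2$2 * b = l * b"
    for a b
  proof (intro exI conjI)
    show "vector [a, b] \<noteq> (0::complex^2)"
      using that(1) by (metis vector_2 zero_index)
    show "\<forall>i. (A *v vector [a, b]) $ i = l * vector [a, b] $ i"
      unfolding forall_2 using that(2,3)
      by (simp add: matrix_vector_mult_def sum_2 vector_2)
  qed
  consider "A$1$2 \<noteq> 0 \<or> A$1$1 - l \<noteq> 0" | "A$2$2 - l \<noteq> 0 \<or> A$2$1 \<noteq> 0"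
    | "A$1$2 = 0" "A$1$1 = l" "A$2$2 = l" "A$2$1 = 0"
    by auto
  then show ?thesis
  proof cases
    case 1
    show ?thesis
      by (rule eigenvector[of "A$1$2" "- (A$1$1 - l)"]) (use 1 d in \<open>auto simp: algebra_simps\<close>)
  next
    case 2
    show ?thesis
      by (rule eigenvector[of "A$2$2 - l" "- A$2$1"]) (use 2 d in \<open>auto simp: algebra_simps\<close>)
  next
    case 3
    show ?thesis by (rule eigenvector[of 1 0]) (use 3 in auto)
  qed
qed

lemma eigenvalue_norm_le_onorm:
  fixes A :: "complex^'n^'n"
  assumes "v \<noteq> 0" and eig: "\<And>i. (A *v v) $ i = l * v $ i"
  shows "cmod l \<le> onorm (\<lambda>x. A *v x)"
proof -
  have "cmod l * norm v = norm (A *v v)"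
    unfolding norm_vec_def by (simp add: eig norm_mult L2_set_right_distrib)
  also have "\<dots> \<le> onorm (\<lambda>x. A *v x) * norm v"
    using onorm[OF matrix_vector_mul_bounded_linear[of A]] by simp
  finally show ?thesis using \<open>v \<noteq> 0\<close> by simp
qed

lemma trace_det_in_Gamma:
  fixes A :: "complex^2^2"
  assumes contr: "onorm (\<lambda>x. A *v x) < 1"
  shows "(A$1$1 + A$2$2, det A) \<in> Gamma"
proof -
  define t where "t = A$1$1 + A$2$2"
  define r where "r = csqrt (t^2 - 4 * det A)"
  define z1 where "z1 = (t + r) / 2"
  define z2 where "z2 = (t - r) / 2"
  have sum: "z1 + z2 = t" unfolding z1_def z2_def by (simp add: field_simps)
  have "z1 * z2 = (t^2 - r^2) / 4"
    unfolding z1_def z2_def by (simp add: field_simps power2_eq_square)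
  then have prod: "z1 * z2 = det A" unfolding r_def by simp
  have root_le_1: "cmod z \<le> 1" if "z = z1 \<or> z = z2" for z
  proof -
    have "z^2 - t * z + det A = (z - z1) * (z - z2)"
      unfolding sum[symmetric] prod[symmetric] by (simp add: algebra_simps power2_eq_square)
    with that have "z^2 - (A$1$1 + A$2$2) * z + det A = 0" unfolding t_def by auto
    then obtain v where "v \<noteq> 0" "\<And>i. (A *v v) $ i = z * v $ i"
      using char_root_eigenvector_2 by blast
    then have "cmod z \<le> onorm (\<lambda>x. A *v x)" by (rule eigenvalue_norm_le_onorm)
    with contr show ?thesis by simp
  qed
  have "(z1 + z2, z1 * z2) \<in> Gamma"
    unfolding Gamma_def using root_le_1 by blast
  then show ?thesis using sum prod unfolding t_def by simp
qed

lemma Gamma_eq_image: "Gamma = (\<lambda>z. (fst z + snd z, fst z * snd z)) ` (cball 0 1 \<times> cball 0 1)"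
  unfolding Gamma_def by force

lemma compact_Gamma: "compact Gamma"
  unfolding Gamma_eq_image
  by (intro compact_continuous_image compact_Times compact_cball continuous_intros)

lemma pentablock_subset: "pentablock \<subseteq> cball 0 1 \<times> Gamma"
proof
  fix w assume "w \<in> pentablock"
  then obtain A :: "complex^2^2" where w: "w = (A $ 2 $ 1, A $ 1 $ 1 + A $ 2 $ 2, det A)"
    and contr: "onorm (\<lambda>x. A *v x) < 1" unfolding pentablock_def by blast
  define e :: "complex^2" where "e = axis 1 1"
  have "A $ 2 $ 1 = (A *v e) $ 2"
    by (simp add: matrix_vector_mult_def axis_def sum_2 e_def)
  then have "cmod (A $ 2 $ 1) \<le> norm (A *v e)"
    using Finite_Cartesian_Product.norm_nth_le[of "A *v e" 2] by simp
  also have "\<dots> \<le> onorm (\<lambda>x. A *v x) * norm e"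
    using onorm[OF matrix_vector_mul_bounded_linear[of A]] by simp
  also have "\<dots> \<le> 1" using contr by (simp add: norm_axis_1 e_def)
  finally show "w \<in> cball 0 1 \<times> Gamma" using w trace_det_in_Gamma[OF contr] by simp
qed

lemma compact_closure_pentablock: "compact (closure pentablock)"
proof -
  have "bounded (cball (0::complex) 1 \<times> Gamma)"
    by (intro bounded_Times bounded_cball compact_imp_bounded compact_Gamma)
  then show ?thesis unfolding compact_closure using pentablock_subset bounded_subset by blast
qed

lemma snd_in_Gamma_if_closure_pentablock: "w \<in> closure pentablock \<Longrightarrow> snd w \<in> Gamma"
  using closure_minimal[OF pentablock_subset closed_Times[OF closed_cball compact_imp_closed[OF compact_Gamma]]]
  by auto

lemma scaled_diag_in_pentablock:
  fixes z1 z2 :: complex and t :: real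
  assumes t: "0 \<le> t" "t < 1" and z: "cmod z1 \<le> 1" "cmod z2 \<le> 1"
  shows "(0, of_real t * z1 + of_real t * z2, (of_real t * z1) * (of_real t * z2)) \<in> pentablock"
proof -
  define d :: "2 \<Rightarrow> complex" where "d i = (if i = 1 then of_real t * z1 else of_real t * z2)" for i
  define D :: "complex^2^2" where "D = (\<chi> i j. if i = j then d i else 0)"
  have Dv: "(D *v x) $ i = d i * x $ i" for x :: "complex^2" and i
    unfolding D_def matrix_vector_mult_def using exhaust_2[of i] by (auto simp: sum_2)
  have "onorm (\<lambda>x. D *v x) \<le> t"
  proof (rule onorm_le)
    fix x :: "complex^2"
    have "norm (D *v x) \<le> norm (t *\<^sub>R x)"
    proof (rule norm_le_componentwise_cart)
      fix i :: 2
      have "cmod (d i) \<le> t" using z t by (auto simp: d_def norm_mult intro: mult_left_le)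
      then show "norm ((D *v x) $ i) \<le> norm ((t *\<^sub>R x) $ i)"
        using t by (simp add: Dv norm_mult mult_right_mono)
    qed
    then show "norm (D *v x) \<le> t * norm x" using t by simp
  qed
  then have "onorm (\<lambda>x. D *v x) < 1" using t by simp
  moreover have "(0, of_real t * z1 + of_real t * z2, (of_real t * z1) * (of_real t * z2))
        = (D $ 2 $ 1, D $ 1 $ 1 + D $ 2 $ 2, det D)"
    unfolding D_def d_def by (simp add: det_2)
  ultimately show ?thesis unfolding pentablock_def by blast
qed

lemma zero_Gamma_in_closure_pentablock:
  assumes "z \<in> Gamma" shows "(0, z) \<in> closure pentablock"
proof -
  obtain z1 z2 where z: "z = (z1 + z2, z1 * z2)" "cmod z1 \<le> 1" "cmod z2 \<le> 1"
    using assms unfolding Gamma_def by blast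
  define t where "t n = 1 - inverse (real (Suc n))" for n
  have t: "0 \<le> t n" "t n < 1" for n unfolding t_def by (auto simp: field_simps)
  have "t \<longlonglongrightarrow> 1"
    unfolding t_def using tendsto_diff[OF tendsto_const LIMSEQ_inverse_real_of_nat, of 1] by simp
  then have "(\<lambda>n. complex_of_real (t n)) \<longlonglongrightarrow> 1"
    using tendsto_of_real by fastforce
  then have "(\<lambda>n. (0::complex, of_real (t n) * z1 + of_real (t n) * z2,
                 (of_real (t n) * z1) * (of_real (t n) * z2)))
      \<longlonglongrightarrow> (0, 1 * z1 + 1 * z2, (1 * z1) * (1 * z2))"
    by (intro tendsto_intros)
  then show ?thesis
    unfolding closure_sequential z(1) using scaled_diag_in_pentablock[OF t z(2,3)] by force
qed

lemma zero_in_Gamma: "(0, 0) \<in> Gamma"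
  unfolding Gamma_def by force

section \<open>Transfer of the spectral set condition\<close>

lemma continuous_on_peval2: "continuous_on K (peval2 c)"
  unfolding peval2_def by (intro continuous_intros)

lemma continuous_on_peval3: "continuous_on K (peval3 c)"
  unfolding peval3_def by (intro continuous_intros)

lemma bdd_above_norm_quotient:
  fixes f g :: "'a::topological_space \<Rightarrow> 'b::real_normed_field"
  assumes "compact K" "continuous_on K f" "continuous_on K g" "\<forall>z\<in>K. g z \<noteq> 0"
  shows "bdd_above ((\<lambda>z. norm (f z / g z)) ` K)"
proof -
  have "continuous_on K (\<lambda>z. norm (f z / g z))"
    using assms by (intro continuous_on_norm continuous_on_divide) auto
  then show ?thesis
    by (intro bounded_imp_bdd_above compact_imp_bounded compact_continuous_image assms(1))
qed

lemma spectral_set2D: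
  assumes "spectral_set2 K T1 T2"
  shows "taylor_spectrum2 T1 T2 \<subseteq> K"
    and "mpoly_coeffs p \<Longrightarrow> mpoly_coeffs q \<Longrightarrow> \<forall>z\<in>K. peval2 q z \<noteq> 0 \<Longrightarrow>
         onorm (\<lambda>x. opeval2 p T1 T2 (inv (opeval2 q T1 T2) x))
           \<le> (SUP z\<in>K. cmod (peval2 p z / peval2 q z))"
  using assms unfolding spectral_set2_def by blast+

lemma spectral_set3D:
  assumes "spectral_set3 K T1 T2 T3"
  shows "taylor_spectrum3 T1 T2 T3 \<subseteq> K"
    and "mpoly_coeffs p \<Longrightarrow> mpoly_coeffs q \<Longrightarrow> \<forall>z\<in>K. peval3 q z \<noteq> 0 \<Longrightarrow>
         onorm (\<lambda>x. opeval3 p T1 T2 T3 (inv (opeval3 q T1 T2 T3) x))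
           \<le> (SUP z\<in>K. cmod (peval3 p z / peval3 q z))"
  using assms unfolding spectral_set3_def by blast+

lemma SUP_Gamma_restrict_first_le:
  assumes mp: "mpoly_coeffs p" and mq: "mpoly_coeffs q"
    and nz: "\<forall>w\<in>closure pentablock. peval3 q w \<noteq> 0"
  shows "(SUP z\<in>Gamma. cmod (peval2 (restrict_first p) z / peval2 (restrict_first q) z))
       \<le> (SUP w\<in>closure pentablock. cmod (peval3 p w / peval3 q w))"
proof (rule cSUP_mono)
  show "Gamma \<noteq> {}" using zero_in_Gamma by (metis empty_iff)
  show "bdd_above ((\<lambda>w. cmod (peval3 p w / peval3 q w)) ` closure pentablock)"
    by (intro bdd_above_norm_quotient compact_closure_pentablock continuous_on_peval3 nz)
  fix z assume "z \<in> Gamma"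
  then have "(0, z) \<in> closure pentablock" by (rule zero_Gamma_in_closure_pentablock)
  moreover have "cmod (peval2 (restrict_first p) z / peval2 (restrict_first q) z)
      = cmod (peval3 p (0, z) / peval3 q (0, z))"
    by (simp only: peval3_zero_first[OF mp] peval3_zero_first[OF mq])
  ultimately show "\<exists>w\<in>closure pentablock.
      cmod (peval2 (restrict_first p) z / peval2 (restrict_first q) z) \<le> cmod (peval3 p w / peval3 q w)"
    by (intro bexI[of _ "(0, z)"]) simp_all
qed

lemma SUP_lift_first_le_Gamma:
  assumes mp: "mpoly_coeffs p" and mq: "mpoly_coeffs q" and nz: "\<forall>z\<in>Gamma. peval2 q z \<noteq> 0"
  shows "(SUP w\<in>closure pentablock. cmod (peval3 (lift_first p) w / peval3 (lift_first q) w))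
       \<le> (SUP z\<in>Gamma. cmod (peval2 p z / peval2 q z))"
proof (rule cSUP_mono)
  show "closure pentablock \<noteq> {}"
    using zero_Gamma_in_closure_pentablock[OF zero_in_Gamma] by (metis empty_iff)
  show "bdd_above ((\<lambda>z. cmod (peval2 p z / peval2 q z)) ` Gamma)"
    by (intro bdd_above_norm_quotient compact_Gamma continuous_on_peval2 nz)
  fix w assume "w \<in> closure pentablock"
  then have "snd w \<in> Gamma" by (rule snd_in_Gamma_if_closure_pentablock)
  moreover have "cmod (peval3 (lift_first p) w / peval3 (lift_first q) w)
      = cmod (peval2 p (snd w) / peval2 q (snd w))"
    by (simp only: peval3_lift_first[OF mp] peval3_lift_first[OF mq])
  ultimately show "\<exists>z\<in>Gamma. cmod (peval3 (lift_first p) w / peval3 (lift_first q) w)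
      \<le> cmod (peval2 p z / peval2 q z)"
    by (intro bexI[of _ "snd w"]) simp_all
qed

lemma spectral_set3_pentablock_if_spectral_set2_Gamma:
  fixes S P :: "'a::complex_hilbert \<Rightarrow> 'a"
  assumes bS: "bop S" and bP: "bop P" and sp2: "spectral_set2 Gamma S P"
  shows "spectral_set3 (closure pentablock) (\<lambda>_. 0) S P"
  unfolding spectral_set3_def
proof (intro conjI allI impI subsetI)
  fix w assume w: "w \<in> taylor_spectrum3 (\<lambda>_. 0) S P"
  obtain l1 l2 l3 where "w = (l1, l2, l3)" by (cases w)
  with w have "w = (0, l2, l3)" "(l2, l3) \<in> Gamma"
    using mem_taylor_spectrum3_zero_first[OF bS bP] spectral_set2D(1)[OF sp2] by auto
  then show "w \<in> closure pentablock" using zero_Gamma_in_closure_pentablock by simp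
next
  fix p q :: "nat \<times> nat \<times> nat \<Rightarrow> complex"
  assume "mpoly_coeffs p \<and> mpoly_coeffs q \<and> (\<forall>w\<in>closure pentablock. peval3 q w \<noteq> 0)"
  then have mp: "mpoly_coeffs p" and mq: "mpoly_coeffs q"
    and nz: "\<forall>w\<in>closure pentablock. peval3 q w \<noteq> 0" by auto
  have "peval2 (restrict_first q) z \<noteq> 0" if "z \<in> Gamma" for z
    using nz zero_Gamma_in_closure_pentablock[OF that] peval3_zero_first[OF mq] by metis
  then have "onorm (\<lambda>x. opeval2 (restrict_first p) S P (inv (opeval2 (restrict_first q) S P) x))
      \<le> (SUP z\<in>Gamma. cmod (peval2 (restrict_first p) z / peval2 (restrict_first q) z))"
    by (intro spectral_set2D(2)[OF sp2] mpoly_coeffs_restrict_first mp mq ballI)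
  also have "\<dots> \<le> (SUP w\<in>closure pentablock. cmod (peval3 p w / peval3 q w))"
    by (rule SUP_Gamma_restrict_first_le[OF mp mq nz])
  finally show "onorm (\<lambda>x. opeval3 p (\<lambda>_. 0) S P (inv (opeval3 q (\<lambda>_. 0) S P) x))
      \<le> (SUP w\<in>closure pentablock. cmod (peval3 p w / peval3 q w))"
    unfolding opeval3_zero_first[OF mp] opeval3_zero_first[OF mq] .
qed

lemma spectral_set2_Gamma_if_spectral_set3_pentablock:
  fixes S P :: "'a::complex_hilbert \<Rightarrow> 'a"
  assumes bS: "bop S" and bP: "bop P" and sp3: "spectral_set3 (closure pentablock) (\<lambda>_. 0) S P"
  shows "spectral_set2 Gamma S P"
  unfolding spectral_set2_def
proof (intro conjI allI impI subsetI)
  fix w assume w: "w \<in> taylor_spectrum2 S P"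
  obtain l2 l3 where "w = (l2, l3)" by (cases w)
  with w have "(0, w) \<in> closure pentablock"
    using mem_taylor_spectrum3_zero_first[OF bS bP] spectral_set3D(1)[OF sp3] by auto
  then show "w \<in> Gamma" using snd_in_Gamma_if_closure_pentablock by fastforce
next
  fix p q :: "nat \<times> nat \<Rightarrow> complex"
  assume "mpoly_coeffs p \<and> mpoly_coeffs q \<and> (\<forall>z\<in>Gamma. peval2 q z \<noteq> 0)"
  then have mp: "mpoly_coeffs p" and mq: "mpoly_coeffs q"
    and nz: "\<forall>z\<in>Gamma. peval2 q z \<noteq> 0" by auto
  have "peval3 (lift_first q) w \<noteq> 0" if "w \<in> closure pentablock" for w
    using nz snd_in_Gamma_if_closure_pentablock[OF that] peval3_lift_first[OF mq] by metis
  then have "onorm (\<lambda>x. opeval3 (lift_first p) (\<lambda>_. 0) S P (inv (opeval3 (lift_first q) (\<lambda>_. 0) S P) x))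
      \<le> (SUP w\<in>closure pentablock. cmod (peval3 (lift_first p) w / peval3 (lift_first q) w))"
    by (intro spectral_set3D(2)[OF sp3] mpoly_coeffs_lift_first mp mq ballI)
  also have "\<dots> \<le> (SUP z\<in>Gamma. cmod (peval2 p z / peval2 q z))"
    by (rule SUP_lift_first_le_Gamma[OF mp mq nz])
  finally show "onorm (\<lambda>x. opeval2 p S P (inv (opeval2 q S P) x))
      \<le> (SUP z\<in>Gamma. cmod (peval2 p z / peval2 q z))"
    unfolding opeval3_lift_first[OF mp] opeval3_lift_first[OF mq] .
qed

theorem mainTheorem12:
  fixes S P :: "'a::complex_hilbert \<Rightarrow> 'a"
  assumes "bop S" and "bop P" and "S \<circ> P = P \<circ> S"
  shows "gamma_contraction S P \<longleftrightarrow> penta_contraction (\<lambda>_. 0) S P"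
proof -
  have commute_zero: "(\<lambda>_. 0) \<circ> S = S \<circ> (\<lambda>_. 0)" "(\<lambda>_. 0) \<circ> P = P \<circ> (\<lambda>_. 0)"
    using linear_0[OF bop_linear[OF assms(1)]] linear_0[OF bop_linear[OF assms(2)]]
    by (auto simp: comp_def)
  have "spectral_set2 Gamma S P \<longleftrightarrow> spectral_set3 (closure pentablock) (\<lambda>_. 0) S P"
    using spectral_set3_pentablock_if_spectral_set2_Gamma[OF assms(1,2)]
      spectral_set2_Gamma_if_spectral_set3_pentablock[OF assms(1,2)] by blast
  then show ?thesis
    unfolding gamma_contraction_def penta_contraction_def
    by (simp only: assms bop_zero commute_zero simp_thms)
qed

end
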